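(* Let $(V,Y,\mathbf{1})$ be a vertex operator algebra, $W$ a vector space and $Y_W:V\otimes W\to W((x))$ a linear map, written $u\otimes w\mapsto Y_W(u,x)w=\sum_{n\in\mathbb{Z}}u_nw\,x^{-n-1}$ (so $u_n=\mathrm{Res}_x x^nY_W(u,x)$). Let $u,v\in V$, $w\in W$ and $k,l\in\mathbb{Z}$ such that $v_nw=0$ for all $n\ge k$ and $u_nw=0$ for all $n\ge l$. Assume: (i) for all $p,q\in\mathbb{Z}$ with $q<k$, $$\mathrm{Res}_{x_0}\mathrm{Res}_{x_2}(x_0+x_2)^px_2^qY_W(u,x_0+x_2)Y_W(v,x_2)w=\mathrm{Res}_{x_0}\mathrm{Res}_{x_2}\,P_{p,q}(x_0,x_2)\,x_2^q(x_0+x_2)^lY_W(Y(u,x_0)v,x_2)w,$$ where $P_{p,q}(x_0,x_2)=\sum_{i=0}^{k-q-1}\binom{p-l}{i}x_0^{p-l-i}x_2^i$ (equivalently, $u_pv_qw=\sum_{i=0}^{k-q-1}\sum_{j=0}^{l}\binom{p-l}{i}\binom{l}{j}(u_{p-l-i+j}v)_{q+l+i-j}w$); (ii) for all $p,q\in\mathbb{Z}$ and all integers $i\ge k-q$, $$\mathrm{Res}_{x_0}\mathrm{Res}_{x_2}\,x_0^{p-l-i}x_2^{q+i}(x_0+x_2)^{l}\,Y_W(Y(u,x_0)v,x_2)w=0.$$ Then $$(x_0+x_2)^lY_W(u,x_0+x_2)Y_W(v,x_2)w=(x_0+x_2)^lY_W(Y(u,x_0)v,x_2)w.$$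
   Context: $Y(u,x)=\sum_n u_nx^{-n-1}$ denotes the vertex operator of $V$. Expressions $(x_0+x_2)^n$ (for any $n\in\mathbb{Z}$) and $Y_W(u,x_0+x_2)=\sum_n u_n(x_0+x_2)^{-n-1}$ are expanded in nonnegative powers of $x_2$. *)

theory Defs
  imports Complex_Main "HOL-Library.Groups_Big_Fun"
begin

text \<open>A vertex operator Y(u,x)v = sum_n u_n v x^(-n-1) is represented by its modes:
  Y u n v = u_n v.  Formal series in two variables x0, x2 with coefficients
  in W are represented as coefficient functions  F a b = coefficient of
  x0^a x2^b.\<close>

definition is_VOA ::
  "(complex \<Rightarrow> 'v::ab_group_add \<Rightarrow> 'v) \<Rightarrow> ('v \<Rightarrow> int \<Rightarrow> 'v \<Rightarrow> 'v) \<Rightarrow> 'v \<Rightarrow> 'v \<Rightarrow> complex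
     \<Rightarrow> (int \<Rightarrow> 'v set) \<Rightarrow> bool" where
  "is_VOA sc Y vac om c gr \<longleftrightarrow>
     vector_space sc \<and>
     \<comment> \<open>grading V = direct sum of V_(n), finite-dimensional, bounded below\<close>
     (\<forall>n. module.subspace sc (gr n)) \<and>
     (\<forall>n. \<exists>B. finite B \<and> B \<subseteq> gr n \<and> gr n \<subseteq> module.span sc B) \<and>
     (\<exists>N. \<forall>n<N. gr n = {0}) \<and>
     (\<forall>v. \<exists>!f. finite {n. f n \<noteq> 0} \<and> (\<forall>n. f n \<in> gr n) \<and> v = Sum_any f) \<and>
     \<comment> \<open>Y : V \<otimes> V \<rightarrow> V[[x,x^-1]] linear\<close>
     (\<forall>n v. Vector_Spaces.linear sc sc (\<lambda>u. Y u n v)) \<and>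
     (\<forall>u n. Vector_Spaces.linear sc sc (Y u n)) \<and>
     \<comment> \<open>truncation\<close>
     (\<forall>u v. \<exists>N. \<forall>n\<ge>N. Y u n v = 0) \<and>
     \<comment> \<open>vacuum property Y(1,x) = id\<close>
     (\<forall>n v. Y vac n v = (if n = -1 then v else 0)) \<and>
     \<comment> \<open>creation property\<close>
     (\<forall>v. (\<forall>n\<ge>0. Y v n vac = 0) \<and> Y v (-1) vac = v) \<and>
     \<comment> \<open>Jacobi identity, in component (Borcherds) form\<close>
     (\<forall>u v w p q r.
        (\<Sum>i::nat. sc ((of_int p) gchoose i) (Y (Y u (r + int i) v) (p + q - int i) w))
      = (\<Sum>i::nat. sc ((-1)^i * ((of_int r) gchoose i)) (Y u (p + r - int i) (Y v (q + int i) w)))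
      - (\<Sum>i::nat. sc ((-1)^i * ((-1) powi r) * ((of_int r) gchoose i))
                      (Y v (q + r - int i) (Y u (p + int i) w)))) \<and>
     \<comment> \<open>Virasoro relations, L(n) = omega_(n+1), central charge c\<close>
     (\<forall>m n v. Y om (m + 1) (Y om (n + 1) v) - Y om (n + 1) (Y om (m + 1) v)
        = sc (of_int (m - n)) (Y om (m + n + 1) v)
          + (if m + n = 0 then sc ((of_int m ^ 3 - of_int m) / 12 * c) v else 0)) \<and>
     \<comment> \<open>L(0) v = n v for v in V_(n)\<close>
     (\<forall>n. \<forall>v\<in>gr n. Y om 1 v = sc (of_int n) v) \<and>
     \<comment> \<open>L(-1)-derivative property: Y(L(-1)u,x) = d/dx Y(u,x)\<close>
     (\<forall>u n v. Y (Y om 0 u) n v = sc (- of_int n) (Y u (n - 1) v))"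

definition is_vertex_map ::
  "(complex \<Rightarrow> 'v::ab_group_add \<Rightarrow> 'v) \<Rightarrow> (complex \<Rightarrow> 'w::ab_group_add \<Rightarrow> 'w)
     \<Rightarrow> ('v \<Rightarrow> int \<Rightarrow> 'w \<Rightarrow> 'w) \<Rightarrow> bool" where
  "is_vertex_map sc scW YW \<longleftrightarrow>
     vector_space scW \<and>
     (\<forall>n w. Vector_Spaces.linear sc scW (\<lambda>u. YW u n w)) \<and>
     (\<forall>u n. Vector_Spaces.linear scW scW (YW u n)) \<and>
     (\<forall>u w. \<exists>N. \<forall>n\<ge>N. YW u n w = 0)"

definition ser_mult ::
  "(complex \<Rightarrow> 'w::ab_group_add \<Rightarrow> 'w) \<Rightarrow> (int \<Rightarrow> int \<Rightarrow> complex) \<Rightarrow> (int \<Rightarrow> int \<Rightarrow> 'w)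
     \<Rightarrow> int \<Rightarrow> int \<Rightarrow> 'w" where
  "ser_mult scW f F = (\<lambda>a b. \<Sum>ij. scW (f (fst ij) (snd ij)) (F (a - fst ij) (b - snd ij)))"

text \<open>(x0+x2)^p expanded in nonnegative powers of x2.\<close>
definition binom_ser :: "int \<Rightarrow> int \<Rightarrow> int \<Rightarrow> complex" where
  "binom_ser p = (\<lambda>a b. if 0 \<le> b \<and> a + b = p then (of_int p) gchoose (nat b) else 0)"

definition mono_ser :: "int \<Rightarrow> int \<Rightarrow> int \<Rightarrow> int \<Rightarrow> complex" where
  "mono_ser i j = (\<lambda>a b. if a = i \<and> b = j then 1 else 0)"

definition P_ser :: "int \<Rightarrow> int \<Rightarrow> int \<Rightarrow> int \<Rightarrow> int \<Rightarrow> int \<Rightarrow> complex" where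
  "P_ser k l p q = (\<lambda>a b. if 0 \<le> b \<and> b \<le> k - q - 1 \<and> a = p - l - b
                          then (of_int (p - l)) gchoose (nat b) else 0)"

definition Res2 :: "(int \<Rightarrow> int \<Rightarrow> 'w) \<Rightarrow> 'w" where
  "Res2 F = F (-1) (-1)"

text \<open>Y_W(u,x0+x2) Y_W(v,x2) w
   = sum_{n,m} u_n v_m w (x0+x2)^(-n-1) x2^(-m-1),
   with (x0+x2)^(-n-1) = sum_{j>=0} binom(-n-1,j) x0^(-n-1-j) x2^j;
   the coefficient of x0^a x2^b collects n = -1-j-a, m = j-1-b.\<close>
definition prod_ser ::
  "(complex \<Rightarrow> 'w::ab_group_add \<Rightarrow> 'w) \<Rightarrow> ('v \<Rightarrow> int \<Rightarrow> 'w \<Rightarrow> 'w) \<Rightarrow> 'v \<Rightarrow> 'v \<Rightarrow> 'w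
     \<Rightarrow> int \<Rightarrow> int \<Rightarrow> 'w" where
  "prod_ser scW YW u v w = (\<lambda>a b. \<Sum>j::nat.
      scW ((of_int (a + int j)) gchoose j) (YW u (-1 - int j - a) (YW v (int j - 1 - b) w)))"

text \<open>Y_W(Y(u,x0)v,x2) w = sum_{n,m} (u_n v)_m w x0^(-n-1) x2^(-m-1).\<close>
definition iter_ser ::
  "('v \<Rightarrow> int \<Rightarrow> 'v \<Rightarrow> 'v) \<Rightarrow> ('v \<Rightarrow> int \<Rightarrow> 'w \<Rightarrow> 'w) \<Rightarrow> 'v \<Rightarrow> 'v \<Rightarrow> 'w
     \<Rightarrow> int \<Rightarrow> int \<Rightarrow> 'w" where
  "iter_ser Y YW u v w = (\<lambda>a b. YW (Y u (-a - 1) v) (-b - 1) w)"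

end

theory Submission
  imports Defs "HOL-Computational_Algebra.Formal_Power_Series"
begin

text \<open>Write L = (x0+x2)^l Y_W(u,x0+x2)Y_W(v,x2)w and R = (x0+x2)^l Y_W(Y(u,x0)v,x2)w.
  Both vanish in x2-degrees below -k: L because v_n w = 0 for n \<ge> k, R by (ii) with i = 0.
  For such series only finitely many terms enter Res (x0+x2)^s x2^q, and Vandermonde's identity
  (x0+x2)^s (x0+x2)^l = (x0+x2)^(s+l) turns (i) with p = s + l into
  Res (x0+x2)^s x2^q L = Res (x0+x2)^s x2^q R for all s and all q < k.
  In the x2-degree this linear system is triangular with unit diagonal, so L = R by
  induction on the x2-degree.\<close>

lemma Sum_any_antidiagonal:
  fixes g :: "int \<times> int \<Rightarrow> 'a::comm_monoid_add"
  assumes "\<And>x y. g (x, y) \<noteq> 0 \<Longrightarrow> 0 \<le> y \<and> y < int N \<and> x = p - y"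
  shows "Sum_any g = (\<Sum>t<N. g (p - int t, int t))"
proof -
  have "Sum_any g = sum g ((\<lambda>t. (p - int t, int t)) ` {..<N})"
  proof (rule Sum_any.expand_superset)
    show "{z. g z \<noteq> 0} \<subseteq> (\<lambda>t. (p - int t, int t)) ` {..<N}"
    proof
      fix z assume "z \<in> {z. g z \<noteq> 0}"
      moreover obtain x y where z: "z = (x, y)" by fastforce
      ultimately have "0 \<le> y \<and> y < int N \<and> x = p - y" using assms by blast
      then show "z \<in> (\<lambda>t. (p - int t, int t)) ` {..<N}"
        using z by (intro image_eqI[of _ _ "nat y"]) auto
    qed
  qed simp
  also have "\<dots> = (\<Sum>t<N. g (p - int t, int t))"
    by (subst sum.reindex) (auto simp: inj_on_def)
  finally show ?thesis .
qed

lemma gchoose_of_int_eq_0: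
  assumes "0 \<le> l" "nat l < d"
  shows "((of_int l :: 'a::field_char_0) gchoose d) = 0"
proof -
  have "(of_int l :: 'a) = of_nat (nat l)" using assms by simp
  then have "(of_int l :: 'a) gchoose d = of_nat (nat l choose d)"
    by (simp add: binomial_gbinomial)
  then show ?thesis using assms by (simp add: binomial_eq_0)
qed

lemma (in module) sum_convolution_truncated:
  fixes N L :: nat
  assumes "\<And>t. N \<le> t \<Longrightarrow> h t = 0" and "\<And>d. L < d \<Longrightarrow> g d = 0"
  shows "(\<Sum>i<N. \<Sum>d\<le>L. (f i * g d) *s h (i + d)) = (\<Sum>t<N. (\<Sum>i\<le>t. f i * g (t - i)) *s h t)"
proof -
  have "(\<Sum>i<N. \<Sum>d\<le>L. (f i * g d) *s h (i + d))
      = (\<Sum>(i, d)\<in>{..<N} \<times> {..N + L}. (f i * g d) *s h (i + d))"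
    unfolding sum.cartesian_product[symmetric]
    by (rule sum.cong[OF refl], rule sum.mono_neutral_left) (auto simp: assms(2))
  also have "\<dots> = (\<Sum>(i, d)\<in>{(i, d). i + d < N}. (f i * g d) *s h (i + d))"
    by (rule sum.mono_neutral_right) (auto, metis assms(1) not_less scale_zero_right)
  also have "\<dots> = (\<Sum>t<N. (\<Sum>i\<le>t. f i * g (t - i)) *s h t)"
    by (simp add: sum.triangle_reindex scale_sum_left)
  finally show ?thesis .
qed

locale complex_module = module scale
  for scale :: "complex \<Rightarrow> 'b::ab_group_add \<Rightarrow> 'b" (infixr \<open>*s\<close> 75)
begin

text \<open>Res_x0 Res_x2 (x0+x2)^p x2^q F with only the x2-degrees \<ge> -k of F kept;
  for F vanishing below x2-degree -k it is the whole residue.\<close>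
definition trunc_res :: "int \<Rightarrow> int \<Rightarrow> int \<Rightarrow> (int \<Rightarrow> int \<Rightarrow> 'b) \<Rightarrow> 'b" where
  "trunc_res k p q F = (\<Sum>t<nat (k - q). (of_int p gchoose t) *s F (-1 - p + int t) (-1 - q - int t))"

lemma ser_mult_mono_ser: "ser_mult scale (mono_ser i j) F a b = F (a - i) (b - j)"
proof -
  have "ser_mult scale (mono_ser i j) F a b
      = Sum_any (\<lambda>z. if z = (i, j) then F (a - fst z) (b - snd z) else 0)"
    unfolding ser_mult_def by (rule Sum_any.cong) (auto simp: mono_ser_def)
  then show ?thesis by simp
qed

lemma ser_mult_binom_ser_vanishes:
  assumes "\<And>a b. b < m \<Longrightarrow> F a b = 0" and "b < m"
  shows "ser_mult scale (binom_ser p) F a b = 0"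
proof -
  have "binom_ser p x y *s F (a - x) (b - y) = 0" for x y
    using assms by (cases "0 \<le> y") (auto simp: binom_ser_def)
  then show ?thesis unfolding ser_mult_def by simp
qed

lemma ser_mult_binom_ser_of_nonneg:
  assumes "0 \<le> l"
  shows "ser_mult scale (binom_ser l) F a b
       = (\<Sum>d\<le>nat l. (of_int l gchoose d) *s F (a - l + int d) (b - int d))"
  unfolding ser_mult_def
proof (subst Sum_any_antidiagonal[where N = "Suc (nat l)" and p = l])
  fix x y
  assume "binom_ser l (fst (x, y)) (snd (x, y)) *s F (a - fst (x, y)) (b - snd (x, y)) \<noteq> 0"
  then have "0 \<le> y" "x = l - y" "(of_int l gchoose nat y :: complex) \<noteq> 0"
    by (auto simp: binom_ser_def split: if_splits)
  with assms gchoose_of_int_eq_0[of l "nat y"]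
  show "0 \<le> y \<and> y < int (Suc (nat l)) \<and> x = l - y"
    by fastforce
qed (simp add: binom_ser_def lessThan_Suc_atMost algebra_simps)

lemma Res2_binom_ser_mono_ser_mult:
  assumes "\<And>a b. b < -k \<Longrightarrow> F a b = 0"
  shows "Res2 (ser_mult scale (binom_ser p) (ser_mult scale (mono_ser 0 q) F)) = trunc_res k p q F"
  unfolding Res2_def ser_mult_def[of _ "binom_ser p"] ser_mult_mono_ser trunc_res_def
proof (subst Sum_any_antidiagonal[where N = "nat (k - q)" and p = p])
  fix x y
  assume "binom_ser p (fst (x, y)) (snd (x, y)) *s F (- 1 - fst (x, y) - 0) (- 1 - snd (x, y) - q) \<noteq> 0"
  then have "0 \<le> y" "x = p - y" "\<not> - 1 - y - q < - k"
    using assms by (auto simp: binom_ser_def split: if_splits)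
  then show "0 \<le> y \<and> y < int (nat (k - q)) \<and> x = p - y" by auto
qed (simp add: binom_ser_def algebra_simps)

lemma Res2_P_ser_mono_ser_mult:
  "Res2 (ser_mult scale (P_ser k l p q) (ser_mult scale (mono_ser 0 q) F)) = trunc_res k (p - l) q F"
  unfolding Res2_def ser_mult_def[of _ "P_ser k l p q"] ser_mult_mono_ser trunc_res_def
proof (subst Sum_any_antidiagonal[where N = "nat (k - q)" and p = "p - l"])
  fix x y
  assume "P_ser k l p q (fst (x, y)) (snd (x, y)) *s F (- 1 - fst (x, y) - 0) (- 1 - snd (x, y) - q) \<noteq> 0"
  then show "0 \<le> y \<and> y < int (nat (k - q)) \<and> x = p - l - y"
    by (auto simp: P_ser_def split: if_splits)
qed (auto simp: P_ser_def algebra_simps intro!: sum.cong)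

lemma trunc_res_binom_ser_mult:
  assumes "0 \<le> l" and F_vanishes: "\<And>a b. b < -k \<Longrightarrow> F a b = 0"
  shows "trunc_res k s q (ser_mult scale (binom_ser l) F) = trunc_res k (s + l) q F"
proof -
  define h where "h t = F (-1 - (s + l) + int t) (-1 - q - int t)" for t
  have "trunc_res k s q (ser_mult scale (binom_ser l) F)
      = (\<Sum>i<nat (k - q). \<Sum>d\<le>nat l. ((of_int s gchoose i) * (of_int l gchoose d)) *s h (i + d))"
    unfolding trunc_res_def ser_mult_binom_ser_of_nonneg[OF assms(1)] scale_sum_right
    by (intro sum.cong refl) (simp add: h_def algebra_simps)
  also have "\<dots> = (\<Sum>t<nat (k - q). (\<Sum>i\<le>t. (of_int s gchoose i) * (of_int l gchoose (t - i))) *s h t)"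
    by (rule sum_convolution_truncated) (auto simp: h_def F_vanishes gchoose_of_int_eq_0 assms(1))
  also have "\<dots> = trunc_res k (s + l) q F"
    unfolding trunc_res_def h_def atMost_atLeast0 gbinomial_Vandermonde by simp
  finally show ?thesis .
qed

lemma prod_ser_vanishes:
  assumes "\<And>n. YW u n 0 = 0" and "\<And>n. k \<le> n \<Longrightarrow> YW v n w = 0" and "b < -k"
  shows "prod_ser scale YW u v w a b = 0"
  unfolding prod_ser_def using assms by simp

lemma eq_if_trunc_res_eq:
  assumes "\<And>a b. b < -k \<Longrightarrow> F a b = G a b"
    and "\<And>p q. q < k \<Longrightarrow> trunc_res k p q F = trunc_res k p q G"
  shows "F = G"
proof (intro ext)
  fix a b
  show "F a b = G a b"
  proof (induction "nat (b + k)" arbitrary: a b rule: less_induct)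
    case less
    show ?case
    proof (cases "b < -k")
      case False
      define p q where "p = -1 - a" and "q = -1 - b"
      obtain m where m: "nat (k - q) = Suc m" "m = nat (b + k)"
        using False q_def by (intro that) auto
      have "(\<Sum>i<m. c i *s F (-1 - p + int (Suc i)) (-1 - q - int (Suc i)))
          = (\<Sum>i<m. c i *s G (-1 - p + int (Suc i)) (-1 - q - int (Suc i)))" for c
        using m(2) by (intro sum.cong refl arg_cong[where f = "scale (c _)"] less) (auto simp: q_def)
      with assms(2)[of q p] False show ?thesis
        unfolding trunc_res_def m(1) sum.lessThan_Suc_shift by (simp add: p_def q_def)
    qed (use assms(1) in blast)
  qed
qed

end

theorem theorem3p1:
  fixes sc :: "complex \<Rightarrow> 'v::ab_group_add \<Rightarrow> 'v"
    and Y :: "'v \<Rightarrow> int \<Rightarrow> 'v \<Rightarrow> 'v"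
    and vac om :: 'v and c :: complex and gr :: "int \<Rightarrow> 'v set"
    and scW :: "complex \<Rightarrow> 'w::ab_group_add \<Rightarrow> 'w"
    and YW :: "'v \<Rightarrow> int \<Rightarrow> 'w \<Rightarrow> 'w"
    and u v :: 'v and w :: 'w and k l :: int
  assumes VOA: "is_VOA sc Y vac om c gr"
    and YW: "is_vertex_map sc scW YW"
    and l_nonneg: "0 \<le> l"
    and v_trunc: "\<forall>n\<ge>k. YW v n w = 0"
    and u_trunc: "\<forall>n\<ge>l. YW u n w = 0"
    and hyp_i: "\<forall>p q. q < k \<longrightarrow>
        Res2 (ser_mult scW (binom_ser p) (ser_mult scW (mono_ser 0 q) (prod_ser scW YW u v w)))
      = Res2 (ser_mult scW (P_ser k l p q) (ser_mult scW (mono_ser 0 q)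
                (ser_mult scW (binom_ser l) (iter_ser Y YW u v w))))"
    and hyp_ii: "\<forall>p q i. i \<ge> k - q \<longrightarrow>
        Res2 (ser_mult scW (mono_ser (p - l - i) (q + i))
                (ser_mult scW (binom_ser l) (iter_ser Y YW u v w))) = 0"
  shows "ser_mult scW (binom_ser l) (prod_ser scW YW u v w)
       = ser_mult scW (binom_ser l) (iter_ser Y YW u v w)"
proof -
  interpret W: vector_space scW
    using YW unfolding is_vertex_map_def by blast
  interpret complex_module scW
    by unfold_locales
  have "Vector_Spaces.linear scW scW (YW u n)" for n
    using YW unfolding is_vertex_map_def by blast
  then have YW_u_0: "YW u n 0 = 0" for n
    using W.vector_space_axioms vector_space_pair.linear_0 unfolding vector_space_pair_def by blast
  define M where "M = prod_ser scW YW u v w"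
  define R where "R = ser_mult scW (binom_ser l) (iter_ser Y YW u v w)"
  have M_vanishes: "M a b = 0" if "b < -k" for a b
    unfolding M_def using YW_u_0 v_trunc that by (intro prod_ser_vanishes) auto
  have R_vanishes: "R a b = 0" if "b < -k" for a b
    using hyp_ii[rule_format, where p = "l - 1 - a" and q = "-1 - b" and i = 0] that
    by (simp add: R_def Res2_def ser_mult_mono_ser)
  show ?thesis
    unfolding M_def[symmetric] R_def[symmetric]
  proof (rule eq_if_trunc_res_eq)
    show "ser_mult scW (binom_ser l) M a b = R a b" if "b < -k" for a b
      using that M_vanishes R_vanishes ser_mult_binom_ser_vanishes by metis
    fix p q assume "q < k"
    have "trunc_res k p q (ser_mult scW (binom_ser l) M) = trunc_res k (p + l) q M"
      using l_nonneg M_vanishes by (rule trunc_res_binom_ser_mult)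
    also have "\<dots> = Res2 (ser_mult scW (binom_ser (p + l)) (ser_mult scW (mono_ser 0 q) M))"
      using M_vanishes by (rule Res2_binom_ser_mono_ser_mult[symmetric])
    also have "\<dots> = Res2 (ser_mult scW (P_ser k l (p + l) q) (ser_mult scW (mono_ser 0 q) R))"
      using hyp_i \<open>q < k\<close> unfolding M_def R_def by blast
    also have "\<dots> = trunc_res k p q R"
      by (simp add: Res2_P_ser_mono_ser_mult)
    finally show "trunc_res k p q (ser_mult scW (binom_ser l) M) = trunc_res k p q R" .
  qed
qed

end
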